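(* Let $s\ge1$ and let $\beta_1,\dotsc,\beta_s$ be positive integers. Then, as an identity of rational functions in $z_1,\dotsc,z_s,w_1$ (with $q$ an indeterminate), \[ \prod_{1\le i<j\le s}\Big(\frac{z_i}{z_j};q\Big)_{\beta_i}\Big(\frac{qz_j}{z_i};q\Big)_{\beta_j}\prod_{i=1}^s\Big(\frac{z_i}{w_1};q\Big)_{\beta_i}^{-1}=\sum_{a=1}^s\sum_{b=0}^{\beta_a-1}G_{a,b}, \] where \[ G_{a,b}=\Big(1-\frac{q^bz_a}{w_1}\Big)^{-1}B_{a,b}\prod_{\substack{1\le i<j\le s\\ i,j\ne a}}\Big(\frac{z_i}{z_j};q\Big)_{\beta_i}\Big(\frac{qz_j}{z_i};q\Big)_{\beta_j}, \] \[ B_{a,b}=\frac{q^{b\sum_{k=1}^{a-1}\beta_k+(b+1)\sum_{k=a+1}^s\beta_k}}{(q^{-b};q)_b(q;q)_{\beta_a-b-1}}\prod_{1\le i<a}\Big(q^{1-\beta_i}\frac{z_a}{z_i};q\Big)_b\Big(q^{b+1}\frac{z_a}{z_i};q\Big)_{\beta_a-b}\prod_{a<j\le s}\Big(q^{-\beta_j}\frac{z_a}{z_j};q\Big)_{b+1}\Big(q^{b+1}\frac{z_a}{z_j};q\Big)_{\beta_a-b-1}. \]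
   Context: $(z;q)_n=(1-z)(1-qz)\dotsm(1-q^{n-1}z)$ for $n\ge1$ and $(z;q)_0=1$. *)

theory Defs
  imports Complex_Main
begin

definition qpoch :: "'a::field \<Rightarrow> 'a \<Rightarrow> nat \<Rightarrow> 'a" where
  "qpoch z q n = (\<Prod>k<n. 1 - q ^ k * z)"

definition pairs :: "nat \<Rightarrow> (nat \<times> nat) set" where
  "pairs s = {(i, j). 1 \<le> i \<and> i < j \<and> j \<le> s}"

definition Bcoef :: "nat \<Rightarrow> (nat \<Rightarrow> nat) \<Rightarrow> (nat \<Rightarrow> complex) \<Rightarrow> complex \<Rightarrow> nat \<Rightarrow> nat \<Rightarrow> complex" where
  "Bcoef s \<beta> z q a b =
     q ^ (b * (\<Sum>k\<in>{1..<a}. \<beta> k) + (b + 1) * (\<Sum>k\<in>{a<..s}. \<beta> k))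
     / (qpoch (q powi (- int b)) q b * qpoch q q (\<beta> a - b - 1))
     * (\<Prod>i\<in>{1..<a}. qpoch (q powi (1 - int (\<beta> i)) * z a / z i) q b
                        * qpoch (q ^ (b + 1) * z a / z i) q (\<beta> a - b))
     * (\<Prod>j\<in>{a<..s}. qpoch (q powi (- int (\<beta> j)) * z a / z j) q (b + 1)
                        * qpoch (q ^ (b + 1) * z a / z j) q (\<beta> a - b - 1))"

end

theory Submission
  imports Defs
begin

text \<open>Up to the factor independent of \<open>w\<close>, the left-hand side is the reciprocal of
  \<open>\<Prod>(1 - q\<^sup>b z\<^sub>a / w)\<close> over \<open>1 \<le> a \<le> s\<close>, \<open>0 \<le> b < \<beta>\<^sub>a\<close>. When these poles are pairwise
  distinct, partial fractions in \<open>1/w\<close> give a sum over the poles, and the coefficient at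
  \<open>w = q\<^sup>b z\<^sub>a\<close> is found by splitting the \<open>q\<close>-Pochhammer symbols in the cross factors
  that involve \<open>z\<^sub>a\<close>: they factor into \<open>Bcoef s \<beta> z q a b\<close> times the product of \<open>1 - q\<^sup>k z\<^sub>i / (q\<^sup>b z\<^sub>a)\<close>
  over the other poles. Coinciding poles are removed by replacing \<open>z\<^sub>i\<close> with \<open>z\<^sub>i u\<^sup>i\<close>:
  the poles are distinct for \<open>u\<close> near but not equal to \<open>1\<close>, and both sides are
  continuous at \<open>u = 1\<close>.\<close>

section \<open>Identities for q-Pochhammer symbols\<close>

lemma power_inj_not_root_of_unity:
  fixes q :: "'a::field"
  assumes "q \<noteq> 0" "\<forall>n>0. q ^ n \<noteq> 1" "q ^ m = q ^ n"
  shows "m = n"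
proof (rule ccontr)
  assume "m \<noteq> n"
  then have "q ^ (max m n - min m n) = 1" "max m n - min m n > 0"
    using assms(1,3) power_diff[of q "min m n" "max m n"] by (auto simp: max_def min_def)
  then show False using assms(2) by blast
qed

lemma qpoch_add: "qpoch y q (c + d) = qpoch y q c * qpoch (q ^ c * y) q d"
  by (induction d) (simp_all add: qpoch_def power_add mult.assoc)

lemma qpoch_eq_0_iff: "qpoch y q n = 0 \<longleftrightarrow> (\<exists>k<n. q ^ k * y = 1)"
  by (auto simp: qpoch_def)

lemma qpoch_reflect:
  fixes y q :: "'a::field"
  assumes "y \<noteq> 0" "q \<noteq> 0"
  shows "qpoch (q / y) q m = (\<Prod>k<m. - (q ^ Suc k / y)) * qpoch (q powi - int m * y) q m"
proof -
  have factor: "1 - q ^ k * (q / y) = - (q ^ Suc k / y) * (1 - q powi - int (Suc k) * y)" for k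
  proof -
    have "q powi - int (Suc k) = inverse (q ^ Suc k)"
      by (simp only: power_int_minus power_int_of_nat)
    then show ?thesis using assms by (simp add: field_simps)
  qed
  have "(\<Prod>k<m. 1 - q powi - int (Suc k) * y) = (\<Prod>k<m. 1 - q powi - int (Suc (m - Suc k)) * y)"
    by (rule prod.nat_diff_reindex[symmetric])
  also have "\<dots> = qpoch (q powi - int m * y) q m"
    unfolding qpoch_def using assms
    by (intro prod.cong) (auto simp: of_nat_diff power_int_diff power_int_minus power_int_of_nat field_simps)
  finally show ?thesis
    unfolding qpoch_def factor prod.distrib by simp
qed

text \<open>Up to a power of \<open>q\<close>, both sides are the product of \<open>1 - q\<^sup>e y\<close> over \<open>-m \<le> e < c\<close>,
  split at \<open>e = 0\<close> on the left and at \<open>e = c - m\<close> on the right.\<close>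

lemma qpoch_mult_qpoch_reflect:
  fixes y q :: "'a::field"
  assumes y: "y \<noteq> 0" and q: "q \<noteq> 0"
  shows "qpoch y q c * qpoch (q / y) q m
       = q ^ (c * m) * qpoch (q powi - int m * y) q c * qpoch (q / (q ^ c * y)) q m"
proof -
  define M where "M x = (\<Prod>k<m. - (q ^ Suc k / x))" for x
  define x where "x = q powi - int m * y"
  have qm: "q ^ m * x = y" and qc: "q ^ c * x = q powi - int m * (q ^ c * y)"
    using q by (simp_all add: x_def power_int_minus field_simps)
  have M: "q ^ (c * m) * M (q ^ c * y) = M y"
  proof -
    have "q ^ (c * m) = (\<Prod>k<m. q ^ c)"
      by (simp add: power_mult)
    then have "q ^ (c * m) * M (q ^ c * y) = (\<Prod>k<m. q ^ c * - (q ^ Suc k / (q ^ c * y)))"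
      by (simp only: M_def prod.distrib)
    also have "\<dots> = M y"
      unfolding M_def using q by (intro prod.cong) auto
    finally show ?thesis .
  qed
  have A: "qpoch y q c * qpoch x q m = qpoch x q c * qpoch (q powi - int m * (q ^ c * y)) q m"
    using qpoch_add[of x q m c] qpoch_add[of x q c m] by (simp add: qm qc add.commute)
  have "q ^ c * y \<noteq> 0" using q y by simp
  have "qpoch y q c * qpoch (q / y) q m = M y * (qpoch y q c * qpoch x q m)"
    unfolding qpoch_reflect[OF y q] M_def x_def by (simp only: ac_simps)
  also have "\<dots> = q ^ (c * m) * qpoch x q c * (M (q ^ c * y) * qpoch (q powi - int m * (q ^ c * y)) q m)"
    unfolding A M[symmetric] by (simp only: ac_simps)
  also have "\<dots> = q ^ (c * m) * qpoch (q powi - int m * y) q c * qpoch (q / (q ^ c * y)) q m"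
    unfolding qpoch_reflect[OF \<open>q ^ c * y \<noteq> 0\<close> q] M_def x_def ..
  finally show ?thesis .
qed

lemma qpoch_pair_split_lower:
  fixes q :: "'a::field"
  assumes q: "q \<noteq> 0" and "zi \<noteq> 0" "za \<noteq> 0" and "b < n"
  shows "qpoch (zi / za) q m * qpoch (q * za / zi) q n
       = q ^ (b * m) * (qpoch (q powi (1 - int m) * za / zi) q b * qpoch (q ^ (b + 1) * za / zi) q (n - b))
         * qpoch (zi / (q ^ b * za)) q m"
proof -
  define y where "y = q * za / zi"
  have y: "y \<noteq> 0" using assms by (simp add: y_def)
  have "qpoch y q n = qpoch y q b * qpoch (q ^ b * y) q (n - b)"
    using qpoch_add[of y q b "n - b"] \<open>b < n\<close> by simp
  moreover have "q / y = zi / za" "q ^ b * y = q ^ (b + 1) * za / zi"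
    "q powi - int m * y = q powi (1 - int m) * za / zi" "q / (q ^ b * y) = zi / (q ^ b * za)"
    using assms by (simp_all add: y_def power_int_diff power_int_minus field_simps)
  ultimately show ?thesis
    using qpoch_mult_qpoch_reflect[OF y q, of b m] by (simp add: y_def[symmetric] ac_simps)
qed

lemma qpoch_pair_split_upper:
  fixes q :: "'a::field"
  assumes q: "q \<noteq> 0" and "zj \<noteq> 0" "za \<noteq> 0" and "b < n"
  shows "qpoch (za / zj) q n * qpoch (q * zj / za) q m
       = q ^ ((b + 1) * m) * (qpoch (q powi - int m * za / zj) q (b + 1) * qpoch (q ^ (b + 1) * za / zj) q (n - b - 1))
         * qpoch (zj / (q ^ b * za)) q m"
proof -
  define y where "y = za / zj"
  have y: "y \<noteq> 0" using assms by (simp add: y_def)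
  have "qpoch y q n = qpoch y q (b + 1) * qpoch (q ^ (b + 1) * y) q (n - b - 1)"
    using qpoch_add[of y q "b + 1" "n - b - 1"] \<open>b < n\<close> by simp
  moreover have "q / y = q * zj / za" "q ^ (b + 1) * y = q ^ (b + 1) * za / zj"
    "q powi - int m * y = q powi - int m * za / zj" "q / (q ^ (b + 1) * y) = zj / (q ^ b * za)"
    using assms by (simp_all add: y_def field_simps)
  ultimately show ?thesis
    using qpoch_mult_qpoch_reflect[OF y q, of "b + 1" m] by (simp add: y_def[symmetric] ac_simps)
qed

lemma prod_one_minus_power_ratio:
  fixes q :: "'a::field"
  assumes q: "q \<noteq> 0" and "b < n"
  shows "(\<Prod>k\<in>{..<n} - {b}. 1 - q ^ k / q ^ b) = qpoch (q powi - int b) q b * qpoch q q (n - b - 1)"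
proof -
  have split: "{..<n} - {b} = {..<b} \<union> {Suc b..<n}" using \<open>b < n\<close> by auto
  have "(\<Prod>k<b. 1 - q ^ k / q ^ b) = qpoch (q powi - int b) q b"
    unfolding qpoch_def power_int_minus power_int_of_nat by (simp add: field_simps)
  moreover have "(\<Prod>k\<in>{Suc b..<n}. 1 - q ^ k / q ^ b) = qpoch q q (n - b - 1)"
    unfolding qpoch_def prod.atLeastLessThan_shift_0[of _ "Suc b"] atLeast0LessThan
    using q by (intro prod.cong) (simp_all add: power_add)
  ultimately show ?thesis
    unfolding split by (subst prod.union_disjoint) auto
qed

lemma Bcoef_denominator_nonzero:
  fixes q :: "'a::field"
  assumes q: "q \<noteq> 0" and not_root: "\<forall>n>0. q ^ n \<noteq> 1" and "b < n"
  shows "qpoch (q powi - int b) q b * qpoch q q (n - b - 1) \<noteq> 0"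
proof -
  have "1 - q ^ k / q ^ b \<noteq> 0" if "k \<noteq> b" for k
  proof
    assume "1 - q ^ k / q ^ b = 0"
    then have "q ^ k = q ^ b" using q by (simp add: field_simps)
    then show False using that power_inj_not_root_of_unity[OF q not_root] by blast
  qed
  then show ?thesis
    unfolding prod_one_minus_power_ratio[OF q \<open>b < n\<close>, symmetric] by (subst prod_zero_iff) auto
qed

section \<open>Partial fractions\<close>

lemma inverse_two_factors_partial_fractions:
  fixes a b x :: "'a::field"
  assumes "a \<noteq> b" "a \<noteq> 0" "b \<noteq> 0" "1 - a * x \<noteq> 0" "1 - b * x \<noteq> 0"
  shows "inverse (1 - a * x) * inverse (1 - b * x)
       = inverse (1 - a / b) * inverse (1 - b * x) + inverse (1 - b / a) * inverse (1 - a * x)"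
proof -
  define u v d where "u = 1 - a * x" and "v = 1 - b * x" and "d = b - a"
  have nonzero: "u \<noteq> 0" "v \<noteq> 0" "d \<noteq> 0" using assms by (auto simp: u_def v_def d_def)
  have inv: "inverse (1 - a / b) = b / d" "inverse (1 - b / a) = - a / d"
    using assms by (simp_all add: d_def field_simps)
  have "inverse (1 - a / b) * inverse v + inverse (1 - b / a) * inverse u = (b * u - a * v) / (d * u * v)"
    unfolding inv using nonzero by (simp add: field_simps)
  also have "b * u - a * v = d" by (simp add: u_def v_def d_def algebra_simps)
  finally show ?thesis
    using nonzero by (simp add: u_def [symmetric] v_def [symmetric] inverse_eq_divide)
qed

lemma inverse_prod_partial_fractions:
  fixes n :: "'b \<Rightarrow> 'a::field"
  assumes "finite I" "I \<noteq> {}" "inj_on n I" "\<forall>i\<in>I. n i \<noteq> 0" "\<forall>i\<in>I. 1 - n i * x \<noteq> 0"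
  shows "inverse (\<Prod>i\<in>I. 1 - n i * x)
       = (\<Sum>i\<in>I. inverse (\<Prod>j\<in>I - {i}. 1 - n j / n i) * inverse (1 - n i * x))"
  using assms
proof (induction I arbitrary: x rule: finite_ne_induct)
  case (singleton k) then show ?case by simp
next
  case (insert k F)
  define c where "c i = inverse (\<Prod>j\<in>F - {i}. 1 - n j / n i)" for i
  have inj: "inj_on n F" and distinct: "\<forall>i\<in>F. n i \<noteq> n k"
    using insert.prems insert.hyps by (auto simp: inj_on_def)
  have at_pole: "inverse (\<Prod>i\<in>F. 1 - n i / n k) = (\<Sum>i\<in>F. c i * inverse (1 - n i / n k))"
    using insert.IH[OF inj, of "1 / n k"] insert.prems distinct by (simp add: c_def)
  have F_minus: "insert k F - {i} = insert k (F - {i})" if "i \<in> F" for i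
    using that insert.hyps by auto
  have "inverse (\<Prod>i\<in>insert k F. 1 - n i * x)
      = (\<Sum>i\<in>F. c i * (inverse (1 - n k * x) * inverse (1 - n i * x)))"
    using insert.IH[OF inj, of x] insert.prems insert.hyps
    by (simp add: c_def sum_distrib_left ac_simps)
  also have "\<dots> = (\<Sum>i\<in>F. c i * inverse (1 - n k / n i) * inverse (1 - n i * x))
      + (\<Sum>i\<in>F. c i * inverse (1 - n i / n k)) * inverse (1 - n k * x)"
  proof -
    have "c i * (inverse (1 - n k * x) * inverse (1 - n i * x))
        = c i * inverse (1 - n k / n i) * inverse (1 - n i * x) + c i * inverse (1 - n i / n k) * inverse (1 - n k * x)"
      if "i \<in> F" for i
      using inverse_two_factors_partial_fractions[of "n k" "n i" x] that insert.prems distinct[rule_format, OF that]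
      by (simp add: distrib_left mult.assoc)
    then have "(\<Sum>i\<in>F. c i * (inverse (1 - n k * x) * inverse (1 - n i * x)))
        = (\<Sum>i\<in>F. c i * inverse (1 - n k / n i) * inverse (1 - n i * x) + c i * inverse (1 - n i / n k) * inverse (1 - n k * x))"
      by (rule sum.cong[OF refl])
    then show ?thesis by (simp only: sum.distrib sum_distrib_right)
  qed
  also have "\<dots> = (\<Sum>i\<in>insert k F. inverse (\<Prod>j\<in>insert k F - {i}. 1 - n j / n i) * inverse (1 - n i * x))"
  proof -
    have "inverse (\<Prod>j\<in>insert k F - {i}. 1 - n j / n i) = c i * inverse (1 - n k / n i)" if "i \<in> F" for i
      using that insert.hyps by (simp add: F_minus c_def mult.commute)
    moreover have "insert k F - {k} = F" using insert.hyps by auto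
    ultimately show ?thesis
      using insert.hyps by (simp add: at_pole add.commute)
  qed
  finally show ?case .
qed

section \<open>The expansion when the poles are distinct\<close>

definition cross_factor :: "(nat \<Rightarrow> nat) \<Rightarrow> (nat \<Rightarrow> 'a::field) \<Rightarrow> 'a \<Rightarrow> nat \<Rightarrow> nat \<Rightarrow> 'a" where
  "cross_factor \<beta> z q i j = qpoch (z i / z j) q (\<beta> i) * qpoch (q * z j / z i) q (\<beta> j)"

definition pole_index :: "nat \<Rightarrow> (nat \<Rightarrow> nat) \<Rightarrow> (nat \<times> nat) set" where
  "pole_index s \<beta> = (SIGMA a:{1..s}. {..<\<beta> a})"

definition pole :: "'a::field \<Rightarrow> (nat \<Rightarrow> 'a) \<Rightarrow> nat \<times> nat \<Rightarrow> 'a" where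
  "pole q z p = q ^ snd p * z (fst p)"

lemma finite_pole_index [simp]: "finite (pole_index s \<beta>)"
  by (simp add: pole_index_def)

lemma prod_qpoch_eq_prod_poles:
  "(\<Prod>i\<in>{1..s}. qpoch (z i * x) q (\<beta> i)) = (\<Prod>p\<in>pole_index s \<beta>. 1 - pole q z p * x)"
  unfolding pole_index_def qpoch_def pole_def by (subst prod.Sigma) (auto simp: split_beta mult.assoc)

lemma prod_pairs_split:
  assumes "a \<in> {1..s}"
  shows "(\<Prod>(i, j)\<in>pairs s. f i j)
       = (\<Prod>(i, j)\<in>{(i, j)\<in>pairs s. i \<noteq> a \<and> j \<noteq> a}. f i j) * (\<Prod>i\<in>{1..<a}. f i a) * (\<Prod>j\<in>{a<..s}. f a j)"
proof -
  define H where "H = {(i, j)\<in>pairs s. i \<noteq> a \<and> j \<noteq> a}"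
  define L U where "L = (\<lambda>i. (i, a)) ` {1..<a}" and "U = Pair a ` {a<..s}"
  have "pairs s = H \<union> (L \<union> U)"
    using assms by (auto simp: H_def L_def U_def pairs_def)
  moreover have "finite H"
    by (rule finite_subset[of _ "{1..s} \<times> {1..s}"]) (auto simp: H_def pairs_def)
  moreover have "finite L" "finite U" "H \<inter> (L \<union> U) = {}" "L \<inter> U = {}"
    by (auto simp: H_def L_def U_def)
  ultimately have "(\<Prod>(i, j)\<in>pairs s. f i j)
      = (\<Prod>(i, j)\<in>H. f i j) * ((\<Prod>(i, j)\<in>L. f i j) * (\<Prod>(i, j)\<in>U. f i j))"
    by (simp add: prod.union_disjoint)
  then show ?thesis
    by (simp add: H_def L_def U_def prod.reindex inj_on_def mult.assoc)
qed

lemma prod_pole_index_remove: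
  assumes "(a, b) \<in> pole_index s \<beta>"
  shows "(\<Prod>p\<in>pole_index s \<beta> - {(a, b)}. g p)
       = (\<Prod>k\<in>{..<\<beta> a} - {b}. g (a, k))
         * ((\<Prod>i\<in>{1..<a}. \<Prod>k<\<beta> i. g (i, k)) * (\<Prod>j\<in>{a<..s}. \<Prod>k<\<beta> j. g (j, k)))"
proof -
  define C L U where "C = Pair a ` ({..<\<beta> a} - {b})"
    and "L = (SIGMA i:{1..<a}. {..<\<beta> i})" and "U = (SIGMA j:{a<..s}. {..<\<beta> j})"
  have "pole_index s \<beta> - {(a, b)} = C \<union> (L \<union> U)"
    using assms by (auto simp: pole_index_def C_def L_def U_def)
  moreover have "finite C" "finite L" "finite U" "C \<inter> (L \<union> U) = {}" "L \<inter> U = {}"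
    by (auto simp: C_def L_def U_def)
  ultimately have "(\<Prod>p\<in>pole_index s \<beta> - {(a, b)}. g p) = prod g C * (prod g L * prod g U)"
    by (simp add: prod.union_disjoint)
  moreover have "prod g C = (\<Prod>k\<in>{..<\<beta> a} - {b}. g (a, k))"
    by (simp add: C_def prod.reindex inj_on_def)
  moreover have "prod g L = (\<Prod>i\<in>{1..<a}. \<Prod>k<\<beta> i. g (i, k))"
    by (simp add: L_def prod.Sigma)
  moreover have "prod g U = (\<Prod>j\<in>{a<..s}. \<Prod>k<\<beta> j. g (j, k))"
    by (simp add: U_def prod.Sigma)
  ultimately show ?thesis by simp
qed

text \<open>Dividing by the product over the other poles shows that \<open>Bcoef s \<beta> z q a b\<close> times the cross
  factors avoiding \<open>a\<close> is the coefficient of \<open>1 / (1 - q\<^sup>b z\<^sub>a / w)\<close> in the partial fraction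
  expansion of the left-hand side.\<close>

lemma Bcoef_residue:
  fixes z :: "nat \<Rightarrow> complex"
  assumes q: "q \<noteq> 0" and not_root: "\<forall>n>0. q ^ n \<noteq> 1" and z: "\<forall>i\<in>{1..s}. z i \<noteq> 0"
    and ab: "(a, b) \<in> pole_index s \<beta>"
  shows "Bcoef s \<beta> z q a b * (\<Prod>(i, j)\<in>{(i, j)\<in>pairs s. i \<noteq> a \<and> j \<noteq> a}. cross_factor \<beta> z q i j)
       * (\<Prod>p\<in>pole_index s \<beta> - {(a, b)}. 1 - pole q z p / pole q z (a, b))
     = (\<Prod>(i, j)\<in>pairs s. cross_factor \<beta> z q i j)"
proof -
  have a: "a \<in> {1..s}" and b: "b < \<beta> a" using ab by (auto simp: pole_index_def)
  have za: "z a \<noteq> 0" using z a by blast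
  define E where "E i = qpoch (z i / (q ^ b * z a)) q (\<beta> i)" for i
  define X where "X i = qpoch (q powi (1 - int (\<beta> i)) * z a / z i) q b * qpoch (q ^ (b + 1) * z a / z i) q (\<beta> a - b)" for i
  define Y where "Y j = qpoch (q powi - int (\<beta> j) * z a / z j) q (b + 1) * qpoch (q ^ (b + 1) * z a / z j) q (\<beta> a - b - 1)" for j
  define D where "D = qpoch (q powi - int b) q b * qpoch q q (\<beta> a - b - 1)"
  have "D \<noteq> 0" unfolding D_def using Bcoef_denominator_nonzero[OF q not_root b] .
  have "Bcoef s \<beta> z q a b = (\<Prod>i\<in>{1..<a}. q ^ (b * \<beta> i)) * (\<Prod>j\<in>{a<..s}. q ^ ((b + 1) * \<beta> j)) / D
      * (\<Prod>i\<in>{1..<a}. X i) * (\<Prod>j\<in>{a<..s}. Y j)"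
    unfolding Bcoef_def D_def X_def Y_def power_add sum_distrib_left power_sum ..
  moreover have "(\<Prod>p\<in>pole_index s \<beta> - {(a, b)}. 1 - pole q z p / pole q z (a, b))
      = D * ((\<Prod>i\<in>{1..<a}. E i) * (\<Prod>j\<in>{a<..s}. E j))"
  proof -
    have ratio: "1 - pole q z (i, k) / pole q z (a, b) = 1 - q ^ k * (z i / (q ^ b * z a))" for i k
      by (simp add: pole_def)
    have self: "(\<Prod>k\<in>{..<\<beta> a} - {b}. 1 - q ^ k * (z a / (q ^ b * z a))) = D"
      using prod_one_minus_power_ratio[OF q b] za by (simp add: D_def)
    show ?thesis
      unfolding prod_pole_index_remove[OF ab] ratio self E_def qpoch_def ..
  qed
  moreover have "cross_factor \<beta> z q i a = q ^ (b * \<beta> i) * X i * E i" if "i \<in> {1..<a}" for i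
    unfolding cross_factor_def X_def E_def
    by (rule qpoch_pair_split_lower[OF q _ za b]) (use that z a in auto)
  moreover have "cross_factor \<beta> z q a j = q ^ ((b + 1) * \<beta> j) * Y j * E j" if "j \<in> {a<..s}" for j
    unfolding cross_factor_def Y_def E_def
    by (rule qpoch_pair_split_upper[OF q _ za b]) (use that z a in auto)
  ultimately show ?thesis
    using \<open>D \<noteq> 0\<close> by (simp add: prod_pairs_split[OF a] prod.distrib field_simps)
qed

lemma partial_fraction_expansion_distinct_poles:
  fixes z :: "nat \<Rightarrow> complex"
  assumes nonempty: "pole_index s \<beta> \<noteq> {}"
    and q: "q \<noteq> 0" and not_root: "\<forall>n>0. q ^ n \<noteq> 1" and z: "\<forall>i\<in>{1..s}. z i \<noteq> 0"
    and poch: "\<forall>i\<in>{1..s}. qpoch (z i / w) q (\<beta> i) \<noteq> 0"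
    and inj: "inj_on (pole q z) (pole_index s \<beta>)"
  shows "(\<Prod>(i, j)\<in>pairs s. cross_factor \<beta> z q i j) * (\<Prod>i\<in>{1..s}. inverse (qpoch (z i / w) q (\<beta> i)))
       = (\<Sum>a\<in>{1..s}. \<Sum>b<\<beta> a. inverse (1 - q ^ b * z a / w) * Bcoef s \<beta> z q a b
            * (\<Prod>(i, j)\<in>{(i, j)\<in>pairs s. i \<noteq> a \<and> j \<noteq> a}. cross_factor \<beta> z q i j))"
proof -
  define I where "I = pole_index s \<beta>"
  define P where "P = (\<Prod>(i, j)\<in>pairs s. cross_factor \<beta> z q i j)"
  define D where "D p = (\<Prod>p'\<in>I - {p}. 1 - pole q z p' / pole q z p)" for p
  have prod_eq: "(\<Prod>i\<in>{1..s}. qpoch (z i / w) q (\<beta> i)) = (\<Prod>p\<in>I. 1 - pole q z p * inverse w)"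
    unfolding I_def prod_qpoch_eq_prod_poles[symmetric] by (simp add: divide_inverse)
  have pole_nonzero: "\<forall>p\<in>I. pole q z p \<noteq> 0"
    using q z by (auto simp: I_def pole_index_def pole_def)
  have "(\<Prod>p\<in>I. 1 - pole q z p * inverse w) \<noteq> 0"
    using poch by (simp add: prod_eq[symmetric])
  then have factor_nonzero: "\<forall>p\<in>I. 1 - pole q z p * inverse w \<noteq> 0"
    by (simp add: I_def)
  have D_nonzero: "D p \<noteq> 0" if "p \<in> I" for p
    using inj that pole_nonzero by (auto simp: D_def I_def inj_on_eq_iff)
  have "(\<Prod>i\<in>{1..s}. inverse (qpoch (z i / w) q (\<beta> i))) = inverse (\<Prod>p\<in>I. 1 - pole q z p * inverse w)"
    unfolding prod_eq[symmetric] prod_inversef[symmetric] by (simp add: o_def)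
  also have "\<dots> = (\<Sum>p\<in>I. inverse (D p) * inverse (1 - pole q z p * inverse w))"
    unfolding D_def using nonempty inj pole_nonzero factor_nonzero
    by (intro inverse_prod_partial_fractions) (simp_all add: I_def)
  finally have "P * (\<Prod>i\<in>{1..s}. inverse (qpoch (z i / w) q (\<beta> i)))
      = (\<Sum>p\<in>I. P * (inverse (D p) * inverse (1 - pole q z p * inverse w)))"
    by (simp add: sum_distrib_left)
  also have "\<dots> = (\<Sum>(a, b)\<in>I. inverse (1 - q ^ b * z a / w) * Bcoef s \<beta> z q a b
            * (\<Prod>(i, j)\<in>{(i, j)\<in>pairs s. i \<noteq> a \<and> j \<noteq> a}. cross_factor \<beta> z q i j))"
  proof (rule sum.cong[OF refl], clarify)
    fix a b assume ab: "(a, b) \<in> I"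
    have "P = Bcoef s \<beta> z q a b * (\<Prod>(i, j)\<in>{(i, j)\<in>pairs s. i \<noteq> a \<and> j \<noteq> a}. cross_factor \<beta> z q i j)
        * D (a, b)"
      using Bcoef_residue[OF q not_root z] ab by (simp add: P_def D_def I_def)
    moreover have "pole q z (a, b) * inverse w = q ^ b * z a / w"
      by (simp add: pole_def divide_inverse)
    moreover have "X * Y * d * (inverse d * u) = u * X * Y" if "d \<noteq> 0" for X Y d u :: complex
      using that by (simp add: field_simps)
    ultimately show "P * (inverse (D (a, b)) * inverse (1 - pole q z (a, b) * inverse w))
        = inverse (1 - q ^ b * z a / w) * Bcoef s \<beta> z q a b
            * (\<Prod>(i, j)\<in>{(i, j)\<in>pairs s. i \<noteq> a \<and> j \<noteq> a}. cross_factor \<beta> z q i j)"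
      using D_nonzero[OF ab] by simp
  qed
  finally show ?thesis
    by (simp add: P_def I_def pole_index_def sum.Sigma)
qed

section \<open>Removing coincidences of poles by perturbation\<close>

lemma continuous_qpoch [continuous_intros]:
  fixes f :: "'a::t2_space \<Rightarrow> 'b::real_normed_field"
  assumes "continuous F f"
  shows "continuous F (\<lambda>u. qpoch (f u) q n)"
  unfolding qpoch_def by (intro continuous_intros assms)

lemma inj_on_pole:
  fixes q :: "'a::field"
  assumes q: "q \<noteq> 0" and not_root: "\<forall>n>0. q ^ n \<noteq> 1" and z: "\<forall>i\<in>{1..s}. z i \<noteq> 0"
    and columns: "\<forall>p\<in>pole_index s \<beta>. \<forall>p'\<in>pole_index s \<beta>. fst p \<noteq> fst p' \<longrightarrow> pole q z p \<noteq> pole q z p'"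
  shows "inj_on (pole q z) (pole_index s \<beta>)"
proof (rule inj_onI)
  fix p p' assume p: "p \<in> pole_index s \<beta>" and p': "p' \<in> pole_index s \<beta>" and eq: "pole q z p = pole q z p'"
  then have "fst p = fst p'" using columns by blast
  moreover have "z (fst p) \<noteq> 0" using p z by (auto simp: pole_index_def)
  then have "q ^ snd p = q ^ snd p'" using eq \<open>fst p = fst p'\<close> by (simp add: pole_def)
  then have "snd p = snd p'" by (rule power_inj_not_root_of_unity[OF q not_root])
  ultimately show "p = p'" by (simp add: prod_eq_iff)
qed

lemma eventually_power_neq:
  fixes c :: complex
  assumes "m > 0"
  shows "eventually (\<lambda>u. u ^ m \<noteq> c) (at x)"
proof -
  have "eventually (\<lambda>u. \<forall>r\<in>{r. r ^ m = c}. u \<noteq> r) (at x)"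
    using finite_nth_roots[OF assms] by (intro eventually_ball_finite) (auto intro: eventually_neq_at_within)
  then show ?thesis by eventually_elim auto
qed

lemma eventually_monomials_neq:
  fixes c d :: complex
  assumes "c \<noteq> 0" "d \<noteq> 0" "m \<noteq> n"
  shows "eventually (\<lambda>u. c * u ^ m \<noteq> d * u ^ n) (at x)"
proof -
  have *: "eventually (\<lambda>u. c * u ^ m \<noteq> d * u ^ n) (at x)" if "c \<noteq> 0" "n < m" for c d :: complex and m n
  proof -
    have "eventually (\<lambda>u. u \<noteq> 0 \<and> u ^ (m - n) \<noteq> d / c) (at x)"
      using that by (intro eventually_conj eventually_neq_at_within eventually_power_neq) simp
    then show ?thesis
    proof eventually_elim
      case (elim u)
      have "u ^ m = u ^ n * u ^ (m - n)" using \<open>n < m\<close> by (simp flip: power_add)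
      with elim \<open>c \<noteq> 0\<close> show ?case by (auto simp: field_simps)
    qed
  qed
  show ?thesis
  proof (cases "n < m")
    case True then show ?thesis using * assms by blast
  next
    case False
    then have "n > m" using assms by simp
    then show ?thesis using *[of d m n c] assms by (auto elim: eventually_mono)
  qed
qed

lemma eventually_perturbed_columns_distinct:
  fixes z :: "nat \<Rightarrow> complex"
  assumes "q \<noteq> 0" and "\<forall>i\<in>{1..s}. z i \<noteq> 0"
  shows "eventually (\<lambda>u. \<forall>p\<in>pole_index s \<beta>. \<forall>p'\<in>pole_index s \<beta>.
           fst p \<noteq> fst p' \<longrightarrow> pole q (\<lambda>i. z i * u ^ i) p \<noteq> pole q (\<lambda>i. z i * u ^ i) p') (at x)"
proof (intro eventually_ball_finite finite_pole_index ballI)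
  fix p p' assume "p \<in> pole_index s \<beta>" "p' \<in> pole_index s \<beta>"
  then have nonzero: "pole q z p \<noteq> 0" "pole q z p' \<noteq> 0"
    using assms by (auto simp: pole_index_def pole_def)
  show "eventually (\<lambda>u. fst p \<noteq> fst p' \<longrightarrow> pole q (\<lambda>i. z i * u ^ i) p \<noteq> pole q (\<lambda>i. z i * u ^ i) p') (at x)"
  proof (cases "fst p = fst p'")
    case False
    with nonzero have "eventually (\<lambda>u. pole q z p * u ^ fst p \<noteq> pole q z p' * u ^ fst p') (at x)"
      by (intro eventually_monomials_neq)
    then show ?thesis
      by eventually_elim (simp add: pole_def mult.assoc)
  qed simp
qed

lemma eventually_perturbed_distinct_poles:
  fixes z :: "nat \<Rightarrow> complex"
  assumes q: "q \<noteq> 0" "\<forall>n>0. q ^ n \<noteq> 1" and w: "w \<noteq> 0" and z: "\<forall>i\<in>{1..s}. z i \<noteq> 0"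
    and poch: "\<forall>i\<in>{1..s}. qpoch (z i / w) q (\<beta> i) \<noteq> 0"
  shows "\<forall>\<^sub>F u in at 1. (\<forall>i\<in>{1..s}. z i * u ^ i \<noteq> 0)
           \<and> (\<forall>i\<in>{1..s}. qpoch (z i * u ^ i / w) q (\<beta> i) \<noteq> 0)
           \<and> inj_on (pole q (\<lambda>i. z i * u ^ i)) (pole_index s \<beta>)"
proof -
  have "\<forall>\<^sub>F u in at 1. qpoch (z i * u ^ i / w) q (\<beta> i) \<noteq> 0" if "i \<in> {1..s}" for i
  proof (rule tendsto_imp_eventually_ne)
    have "isCont (\<lambda>u. qpoch (z i * u ^ i / w) q (\<beta> i)) 1"
      using w by (intro continuous_intros)
    then show "((\<lambda>u. qpoch (z i * u ^ i / w) q (\<beta> i)) \<longlongrightarrow> qpoch (z i / w) q (\<beta> i)) (at 1)"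
      by (simp add: isCont_def)
  qed (use poch that in blast)
  then have "\<forall>\<^sub>F u in at 1. \<forall>i\<in>{1..s}. qpoch (z i * u ^ i / w) q (\<beta> i) \<noteq> 0"
    by (intro eventually_ball_finite) auto
  moreover note eventually_perturbed_columns_distinct[OF q(1) z, of \<beta> 1]
  moreover have "\<forall>\<^sub>F u in at (1::complex). u \<noteq> 0"
    by (rule eventually_neq_at_within)
  ultimately show ?thesis
  proof eventually_elim
    case (elim u)
    then have "\<forall>i\<in>{1..s}. z i * u ^ i \<noteq> 0" using z by simp
    with elim show ?case using inj_on_pole[OF q, of s "\<lambda>i. z i * u ^ i" \<beta>] by blast
  qed
qed

lemma isCont_eventually_eq_imp_eq:
  fixes f g :: "'a::{t2_space, perfect_space} \<Rightarrow> 'b::t2_space"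
  assumes "isCont f x" "isCont g x" "eventually (\<lambda>u. f u = g u) (at x)"
  shows "f x = g x"
  using at_within_isCont_imp_nhds[OF assms(3,1,2)] by (rule eventually_nhds_x_imp_x)

lemma isCont_Bcoef:
  fixes Z :: "complex \<Rightarrow> nat \<Rightarrow> complex"
  assumes "\<forall>i\<in>{1..s}. isCont (\<lambda>u. Z u i) x" "\<forall>i\<in>{1..s}. Z x i \<noteq> 0"
    and "q \<noteq> 0" "\<forall>n>0. q ^ n \<noteq> 1" "a \<in> {1..s}" "b < \<beta> a"
  shows "isCont (\<lambda>u. Bcoef s \<beta> (Z u) q a b) x"
  unfolding Bcoef_def using assms Bcoef_denominator_nonzero[OF assms(3,4,6)]
  by (intro continuous_intros) auto

lemma isCont_expansion_lhs:
  fixes Z :: "complex \<Rightarrow> nat \<Rightarrow> complex"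
  assumes "\<forall>i\<in>{1..s}. isCont (\<lambda>u. Z u i) x" "\<forall>i\<in>{1..s}. Z x i \<noteq> 0" "w \<noteq> 0"
    and "\<forall>i\<in>{1..s}. qpoch (Z x i / w) q (\<beta> i) \<noteq> 0"
  shows "isCont (\<lambda>u. (\<Prod>(i, j)\<in>pairs s. cross_factor \<beta> (Z u) q i j)
           * (\<Prod>i\<in>{1..s}. inverse (qpoch (Z u i / w) q (\<beta> i)))) x"
  unfolding cross_factor_def split_beta using assms
  by (intro continuous_intros) (auto simp: pairs_def)

lemma isCont_expansion_rhs:
  fixes Z :: "complex \<Rightarrow> nat \<Rightarrow> complex"
  assumes "\<forall>i\<in>{1..s}. isCont (\<lambda>u. Z u i) x" "\<forall>i\<in>{1..s}. Z x i \<noteq> 0"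
    and "q \<noteq> 0" "\<forall>n>0. q ^ n \<noteq> 1" "w \<noteq> 0"
    and "\<forall>i\<in>{1..s}. qpoch (Z x i / w) q (\<beta> i) \<noteq> 0"
  shows "isCont (\<lambda>u. \<Sum>a\<in>{1..s}. \<Sum>b<\<beta> a. inverse (1 - q ^ b * Z u a / w) * Bcoef s \<beta> (Z u) q a b
           * (\<Prod>(i, j)\<in>{(i, j)\<in>pairs s. i \<noteq> a \<and> j \<noteq> a}. cross_factor \<beta> (Z u) q i j)) x"
  unfolding cross_factor_def split_beta using assms
  by (intro continuous_intros isCont_Bcoef) (auto simp: pairs_def qpoch_eq_0_iff)

theorem proposition4p2:
  fixes s :: nat and \<beta> :: "nat \<Rightarrow> nat" and z :: "nat \<Rightarrow> complex" and w q :: complex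
  assumes "s \<ge> 1"
    and "\<forall>i\<in>{1..s}. \<beta> i > 0"
    and "q \<noteq> 0" and "\<forall>n>0. q ^ n \<noteq> 1"
    and "w \<noteq> 0" and "\<forall>i\<in>{1..s}. z i \<noteq> 0"
    and "\<forall>i\<in>{1..s}. qpoch (z i / w) q (\<beta> i) \<noteq> 0"
  shows "(\<Prod>(i, j)\<in>pairs s. qpoch (z i / z j) q (\<beta> i) * qpoch (q * z j / z i) q (\<beta> j))
           * (\<Prod>i\<in>{1..s}. inverse (qpoch (z i / w) q (\<beta> i)))
         = (\<Sum>a\<in>{1..s}. \<Sum>b<\<beta> a.
              inverse (1 - q ^ b * z a / w) * Bcoef s \<beta> z q a b
              * (\<Prod>(i, j)\<in>{(i, j)\<in>pairs s. i \<noteq> a \<and> j \<noteq> a}.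
                   qpoch (z i / z j) q (\<beta> i) * qpoch (q * z j / z i) q (\<beta> j)))"
    (is "?L z = ?R z")
proof -
  note s = assms(1) and \<beta> = assms(2) and q = assms(3,4) and w = assms(5) and z = assms(6)
    and poch = assms(7)
  define zu where "zu u = (\<lambda>i. z i * u ^ i)" for u :: complex
  have "(1, 0) \<in> pole_index s \<beta>" using s \<beta> by (simp add: pole_index_def)
  then have nonempty: "pole_index s \<beta> \<noteq> {}" by blast
  from eventually_perturbed_distinct_poles[OF q w z poch]
  have eq: "\<forall>\<^sub>F u in at 1. ?L (zu u) = ?R (zu u)"
  proof eventually_elim
    case (elim u)
    then have "\<forall>i\<in>{1..s}. zu u i \<noteq> 0" "\<forall>i\<in>{1..s}. qpoch (zu u i / w) q (\<beta> i) \<noteq> 0"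
      "inj_on (pole q (zu u)) (pole_index s \<beta>)"
      by (simp_all add: zu_def)
    from partial_fraction_expansion_distinct_poles[OF nonempty q this]
    show ?case unfolding cross_factor_def .
  qed
  have "\<forall>i\<in>{1..s}. isCont (\<lambda>u. zu u i) 1" "\<forall>i\<in>{1..s}. zu 1 i \<noteq> 0"
    "\<forall>i\<in>{1..s}. qpoch (zu 1 i / w) q (\<beta> i) \<noteq> 0"
    using z poch by (simp_all add: zu_def)
  from isCont_expansion_lhs[OF this(1,2) w this(3)] isCont_expansion_rhs[OF this(1,2) q w this(3)]
  have "isCont (\<lambda>u. ?L (zu u)) 1" "isCont (\<lambda>u. ?R (zu u)) 1"
    unfolding cross_factor_def .
  then have "?L (zu 1) = ?R (zu 1)"
    using eq by (rule isCont_eventually_eq_imp_eq)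
  then show ?thesis by (simp add: zu_def)
qed

end
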